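(* Let $p$ be a real homogeneous polynomial of degree $d\ge1$ in $n\ge2$ variables, let $\epsilon>0$, and let $k$ be a positive integer such that $$\frac{n-1}{2k}\ln(kd+1)<\ln(1+\epsilon).$$ Then $\|p\|_{2k}\le\|p\|_\infty\le(1+\epsilon)\|p\|_{2k}$.
   Context: $\mathbb{S}^{n-1}$ is the unit sphere in $\mathbb{R}^n$ with rotation-invariant probability measure $dx$; $\|p\|_{2k}=\left(\int_{\mathbb{S}^{n-1}}p^{2k}(x)\,dx\right)^{1/(2k)}$ and $\|p\|_\infty=\max_{x\in\mathbb{S}^{n-1}}|p(x)|$. *)

theory Defs
  imports "HOL-Analysis.Analysis"
begin

text \<open>A real homogeneous polynomial of degree d in the variables x_i (i ranging over the
finite index type 'n, so n = CARD('n)), given by its coefficient function on exponent vectors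
alpha with total degree d.\<close>
definition hom_poly :: "nat \<Rightarrow> (('n::finite \<Rightarrow> nat) \<Rightarrow> real) \<Rightarrow> real^'n \<Rightarrow> real" where
  "hom_poly d c x = (\<Sum>\<alpha>\<in>{\<alpha>::'n \<Rightarrow> nat. sum \<alpha> UNIV = d}. c \<alpha> * (\<Prod>i\<in>UNIV. (x $ i) ^ (\<alpha> i)))"

text \<open>Integral over the unit sphere with respect to the rotation-invariant probability
measure, realised as the normalised cone measure:
  integral over S^(n-1) of f = (1 / vol B) * integral over the unit ball B of f(x/|x|).\<close>
definition sphere_avg :: "(real^'n::finite \<Rightarrow> real) \<Rightarrow> real" where
  "sphere_avg f = integral (ball 0 1) (\<lambda>x. f (x /\<^sub>R norm x)) / Henstock_Kurzweil_Integration.content (ball (0::real^'n) 1)"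

definition sph_Lnorm :: "nat \<Rightarrow> (real^'n::finite \<Rightarrow> real) \<Rightarrow> real" where
  "sph_Lnorm k p = (sphere_avg (\<lambda>x. p x ^ (2*k))) powr (1 / real (2*k))"

definition sph_sup_norm :: "(real^'n::finite \<Rightarrow> real) \<Rightarrow> real" where
  "sph_sup_norm p = (SUP x\<in>sphere (0::real^'n) 1. \<bar>p x\<bar>)"

end

theory Submission
  imports Defs
begin

text \<open>Let V be the space of real homogeneous polynomials of degree m in n variables, with the
  inner product given by the average of f g over the unit sphere, and let e_1, ..., e_r be an
  orthonormal basis of V, obtained by Gram-Schmidt from the monomials, so that r is at most the
  number N of monomials of degree m. For q in V, Cauchy-Schwarz gives q(x)^2 <= K(x) ||q||_2^2
  with K(x) = sum_i e_i(x)^2. The sphere measure is rotation invariant, so the e_i composed with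
  a rotation again form an orthonormal system; together with the reproducing property of K and
  Bessel's inequality this makes K constant on the sphere, hence equal to its average r.
  Applied to q = p^k, of degree kd, this gives ||p||_inf^2k <= N ||p||_2k^2k, and
  N <= (kd+1)^(n-1), whose 2k-th root is below 1 + eps by hypothesis. The other inequality
  holds because the sphere measure is a probability measure.\<close>

section \<open>Rotation invariance of integrals over the unit ball\<close>

text \<open>The change of variables theorems of HOL-Analysis need an index type of sort
  {finite, wellorder}. A copy of an arbitrary finite index type, ordered through to_nat,
  supplies one; relabelling the coordinates transfers the result back.\<close>

typedef 'a well_ordered = "UNIV :: 'a set"
  morphisms of_well_ordered to_well_ordered by auto

instantiation well_ordered :: (finite) linorder
begin
definition "x \<le> y \<longleftrightarrow> to_nat (of_well_ordered x) \<le> to_nat (of_well_ordered y)"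
definition "x < y \<longleftrightarrow> to_nat (of_well_ordered x) < to_nat (of_well_ordered y)"
instance
  by standard (auto simp: less_eq_well_ordered_def less_well_ordered_def of_well_ordered_inject[symmetric])
end

instance well_ordered :: (finite) wellorder
proof
  fix P :: "'a well_ordered \<Rightarrow> bool" and a
  assume step: "\<And>x. (\<And>y. y < x \<Longrightarrow> P y) \<Longrightarrow> P x"
  show "P a"
    by (induction a rule: measure_induct_rule[of "\<lambda>x. to_nat (of_well_ordered x)"])
       (rule step, simp add: less_well_ordered_def)
qed

instance well_ordered :: (finite) finite
proof
  have "UNIV = range to_well_ordered"
    by (metis of_well_ordered_inverse surj_def)
  then show "finite (UNIV :: 'a well_ordered set)"
    by (metis finite finite_imageI)
qed

lemma integral_ball_orthogonal_transformation_wellorder: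
  fixes f :: "(real, 'm::{finite,wellorder}) vec \<Rightarrow> real" and T :: "(real, 'm) vec \<Rightarrow> (real, 'm) vec"
  assumes T: "orthogonal_transformation T" and f: "f absolutely_integrable_on ball 0 1"
  shows "(f \<circ> T) absolutely_integrable_on ball 0 1 \<and> integral (ball 0 1) (f \<circ> T) = integral (ball 0 1) f"
proof -
  have lin: "linear T" and lin_inv: "linear (inv T)"
    using T orthogonal_transformation_inv orthogonal_transformation_linear by blast+
  have inv: "inv T (T x) = x" "T (inv T x) = x" for x
    using orthogonal_transformation_bij[OF T] by (simp_all add: bij_is_inj bij_is_surj surj_f_inv_f)
  have norm: "norm (T x) = norm x" "norm (inv T x) = norm x" for x
    using T orthogonal_transformation_inv[OF T] by (simp_all add: orthogonal_transformation_norm)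
  have "(\<lambda>x. \<bar>det (matrix T)\<bar> * f (T x)) absolutely_integrable_on ball 0 1
      \<and> integral (ball 0 1) (\<lambda>x. \<bar>det (matrix T)\<bar> * f (T x)) = integral (ball 0 1) f"
    using f by (subst cov_invertible_real[where h="inv T" and h'="\<lambda>_. inv T"])
      (auto simp: linear_imp_has_derivative lin lin_inv inv norm)
  then show ?thesis
    using T by (simp add: o_def)
qed

lemma has_integral_ball_twiddle:
  fixes g :: "'a::euclidean_space \<Rightarrow> 'b::euclidean_space" and f :: "'b \<Rightarrow> real"
  assumes hg: "\<And>x. h (g x) = x" and gh: "\<And>y. g (h y) = y"
    and lin: "linear g" and norm_g: "\<And>x. norm (g x) = norm x"
    and box_g: "\<And>u v. \<exists>w z. g ` cbox u v = cbox w z"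
    and box_h: "\<And>u v. \<exists>w z. h ` cbox u v = cbox w z"
    and content_g: "\<And>u v. Henstock_Kurzweil_Integration.content (g ` cbox u v) = Henstock_Kurzweil_Integration.content (cbox u v)"
    and f: "(f has_integral i) (ball 0 1)"
  shows "((f \<circ> g) has_integral i) (ball 0 1)"
proof -
  obtain a :: 'b where sub: "ball 0 1 \<subseteq> cbox (-a) a"
    using bounded_subset_cbox_symmetric[OF bounded_ball] by blast
  have "((\<lambda>y. if y \<in> ball 0 1 then f y else 0) has_integral i) (cbox (-a) a)"
    using has_integral_restrict[OF sub] f by blast
  then have "((\<lambda>x. if g x \<in> ball 0 1 then f (g x) else 0) has_integral i) (h ` cbox (-a) a)"
    using has_integral_twiddle[where r=1, OF _ hg gh _ box_g box_h] content_g
      linear_continuous_at[OF lin[unfolded linear_conv_bounded_linear]] by simp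
  moreover have "ball 0 1 \<subseteq> h ` cbox (-a) a"
    using sub norm_g hg by (metis image_eqI mem_ball_0 subsetD subsetI)
  ultimately have "((\<lambda>x. f (g x)) has_integral i) (ball 0 1)"
    using has_integral_restrict[of "ball 0 1" "h ` cbox (-a) a" "\<lambda>x. f (g x)" i] by (simp add: norm_g)
  then show ?thesis
    by (simp add: o_def)
qed

definition vec_reindex :: "('b::finite \<Rightarrow> 'a::finite) \<Rightarrow> real^'a \<Rightarrow> real^'b" where
  "vec_reindex \<sigma> x = (\<chi> j. x $ \<sigma> j)"

lemma vec_reindex_inverse: "(\<And>i. \<sigma> (\<tau> i) = i) \<Longrightarrow> vec_reindex \<tau> (vec_reindex \<sigma> x) = x"
  by (simp add: vec_reindex_def vec_eq_iff)

lemma linear_vec_reindex: "linear (vec_reindex \<sigma>)"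
  by (rule linearI) (simp_all add: vec_reindex_def vec_eq_iff)

lemma norm_vec_reindex:
  assumes "bij \<sigma>"
  shows "norm (vec_reindex \<sigma> x) = norm x"
proof -
  have "(\<Sum>j\<in>UNIV. (x $ \<sigma> j)\<^sup>2) = (\<Sum>i\<in>UNIV. (x $ i)\<^sup>2)"
    using sum.reindex_bij_betw[of \<sigma> UNIV UNIV "\<lambda>i. (x $ i)\<^sup>2"] assms by (simp add: bij_betw_def)
  then show ?thesis
    by (simp add: norm_vec_def L2_set_def vec_reindex_def)
qed

lemma vec_reindex_cbox:
  assumes "\<And>i. \<sigma> (\<tau> i) = i" "\<And>j. \<tau> (\<sigma> j) = j"
  shows "vec_reindex \<sigma> ` cbox u v = cbox (vec_reindex \<sigma> u) (vec_reindex \<sigma> v)"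
proof (intro equalityI subsetI)
  fix y assume y: "y \<in> cbox (vec_reindex \<sigma> u) (vec_reindex \<sigma> v)"
  have "vec_reindex \<tau> y \<in> cbox u v"
    unfolding mem_box_cart
  proof
    fix i
    show "u $ i \<le> vec_reindex \<tau> y $ i \<and> vec_reindex \<tau> y $ i \<le> v $ i"
      using y[unfolded mem_box_cart, rule_format, of "\<tau> i"] assms by (simp add: vec_reindex_def)
  qed
  moreover have "y = vec_reindex \<sigma> (vec_reindex \<tau> y)"
    using vec_reindex_inverse[of \<tau> \<sigma>] assms by simp
  ultimately show "y \<in> vec_reindex \<sigma> ` cbox u v" by blast
qed (auto simp: mem_box_cart vec_reindex_def)

lemma content_vec_reindex_cbox:
  assumes "\<And>i. \<sigma> (\<tau> i) = i" "\<And>j. \<tau> (\<sigma> j) = j"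
  shows "Henstock_Kurzweil_Integration.content (vec_reindex \<sigma> ` cbox u v)
    = Henstock_Kurzweil_Integration.content (cbox u v)"
proof (cases "cbox u v = {}")
  case False
  then have ne: "cbox (vec_reindex \<sigma> u) (vec_reindex \<sigma> v) \<noteq> {}"
    using vec_reindex_cbox[OF assms] by auto
  have "bij \<sigma>"
    using assms by (metis bijI')
  then have "(\<Prod>j\<in>UNIV. v $ \<sigma> j - u $ \<sigma> j) = (\<Prod>i\<in>UNIV. v $ i - u $ i)"
    using prod.reindex_bij_betw[of \<sigma> UNIV UNIV "\<lambda>i. v $ i - u $ i"] by (simp add: bij_betw_def)
  then show ?thesis
    unfolding vec_reindex_cbox[OF assms] content_cbox_cart[OF ne] content_cbox_cart[OF False]
    by (simp add: vec_reindex_def)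
qed simp

lemma has_integral_ball_vec_reindex:
  fixes f :: "real^'a::finite \<Rightarrow> real" and \<sigma> :: "'b::finite \<Rightarrow> 'a"
  assumes inv: "\<And>i. \<sigma> (\<tau> i) = i" "\<And>j. \<tau> (\<sigma> j) = j"
    and f: "(f has_integral i) (ball 0 1)"
  shows "((f \<circ> vec_reindex \<tau>) has_integral i) (ball 0 1)"
proof (rule has_integral_ball_twiddle[OF _ _ linear_vec_reindex _ _ _ _ f])
  show "vec_reindex \<sigma> (vec_reindex \<tau> x) = x" "vec_reindex \<tau> (vec_reindex \<sigma> y) = y" for x y
    using vec_reindex_inverse inv by metis+
  show "norm (vec_reindex \<tau> x) = norm x" for x
    using inv by (metis bijI' norm_vec_reindex)
  show "\<exists>w z. vec_reindex \<tau> ` cbox u v = cbox w z" for u v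
    using vec_reindex_cbox inv by metis
  show "\<exists>w z. vec_reindex \<sigma> ` cbox u v = cbox w z" for u v
    using vec_reindex_cbox inv by metis
  show "Henstock_Kurzweil_Integration.content (vec_reindex \<tau> ` cbox u v) = Henstock_Kurzweil_Integration.content (cbox u v)" for u v
    using content_vec_reindex_cbox inv by metis
qed

lemma integral_ball_vec_reindex:
  fixes f :: "real^'a::finite \<Rightarrow> real" and \<sigma> :: "'b::finite \<Rightarrow> 'a"
  assumes inv: "\<And>i. \<sigma> (\<tau> i) = i" "\<And>j. \<tau> (\<sigma> j) = j"
    and f: "f absolutely_integrable_on ball 0 1"
  shows "(f \<circ> vec_reindex \<tau>) absolutely_integrable_on ball 0 1
    \<and> integral (ball 0 1) (f \<circ> vec_reindex \<tau>) = integral (ball 0 1) f"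
proof -
  have "((f \<circ> vec_reindex \<tau>) has_integral integral (ball 0 1) f) (ball 0 1)"
    "(((\<lambda>x. norm (f x)) \<circ> vec_reindex \<tau>) has_integral integral (ball 0 1) (\<lambda>x. norm (f x))) (ball 0 1)"
    using f by (auto intro!: has_integral_ball_vec_reindex[OF inv] simp: absolutely_integrable_on_def)
  then show ?thesis
    by (auto simp: absolutely_integrable_on_def o_def integral_unique)
qed

lemma integral_ball_orthogonal_transformation:
  fixes f :: "real^'n::finite \<Rightarrow> real" and T :: "real^'n \<Rightarrow> real^'n"
  assumes T: "orthogonal_transformation T" and f: "f absolutely_integrable_on ball 0 1"
  shows "integral (ball 0 1) (f \<circ> T) = integral (ball 0 1) f"
proof -
  let ?P = "vec_reindex (of_well_ordered :: 'n well_ordered \<Rightarrow> 'n)"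
  let ?Q = "vec_reindex (to_well_ordered :: 'n \<Rightarrow> 'n well_ordered)"
  have inv: "\<And>i. of_well_ordered (to_well_ordered i) = i" "\<And>j. to_well_ordered (of_well_ordered j) = j"
    by (simp_all add: to_well_ordered_inverse of_well_ordered_inverse)
  have QP: "?Q (?P x) = x" for x
    by (simp add: vec_reindex_inverse inv)
  have bij: "bij (of_well_ordered :: 'n well_ordered \<Rightarrow> 'n)" "bij (to_well_ordered :: 'n \<Rightarrow> 'n well_ordered)"
    using inv by (metis bijI')+
  have "orthogonal_transformation (?P \<circ> T \<circ> ?Q)"
    using T by (simp add: orthogonal_transformation linear_compose linear_vec_reindex
        norm_vec_reindex[OF bij(1)] norm_vec_reindex[OF bij(2)] orthogonal_transformation_norm)
  moreover have fQ: "(f \<circ> ?Q) absolutely_integrable_on ball 0 1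
      \<and> integral (ball 0 1) (f \<circ> ?Q) = integral (ball 0 1) f"
    using integral_ball_vec_reindex[OF inv f] .
  ultimately have fTQ: "(f \<circ> T \<circ> ?Q) absolutely_integrable_on ball 0 1
      \<and> integral (ball 0 1) (f \<circ> T \<circ> ?Q) = integral (ball 0 1) f"
    using integral_ball_orthogonal_transformation_wellorder[of "?P \<circ> T \<circ> ?Q" "f \<circ> ?Q"]
    by (simp add: o_def QP)
  have "integral (ball 0 1) (f \<circ> T) = integral (ball 0 1) (f \<circ> T \<circ> ?Q \<circ> ?P)"
    by (simp add: o_def QP)
  also have "\<dots> = integral (ball 0 1) f"
    using integral_ball_vec_reindex[OF inv(2,1) fTQ[THEN conjunct1]] fTQ by simp
  finally show ?thesis .
qed

section \<open>Averages over the unit sphere\<close>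

lemma absolutely_integrable_on_radial:
  fixes f :: "real^'n::finite \<Rightarrow> real"
  assumes f: "continuous_on UNIV f" and S: "S \<in> lmeasurable"
  shows "(\<lambda>x. f (x /\<^sub>R norm x)) absolutely_integrable_on S"
proof -
  have "f \<in> borel_measurable borel"
    using f borel_measurable_continuous_onI by blast
  then have "(\<lambda>x. f (x /\<^sub>R norm x)) \<in> borel_measurable (lebesgue_on S)"
    by (simp add: measurable_completion measurable_restrict_space1)
  moreover obtain B where "\<And>y. y \<in> f ` cball 0 1 \<Longrightarrow> norm y \<le> B"
    using compact_continuous_image[OF continuous_on_subset[OF f] compact_cball]
    by (metis compact_imp_bounded bounded_iff subset_UNIV)
  then have "norm (f (x /\<^sub>R norm x)) \<le> B" for x :: "real^'n"
    by (cases "x = 0") auto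
  ultimately show ?thesis
    using S by (intro measurable_bounded_by_integrable_imp_absolutely_integrable[where g="\<lambda>_. B"])
      (auto intro: integrable_on_const)
qed

lemma integrable_on_radial:
  fixes f :: "real^'n::finite \<Rightarrow> real"
  assumes "continuous_on UNIV f"
  shows "(\<lambda>x. f (x /\<^sub>R norm x)) integrable_on ball 0 1"
  using absolutely_integrable_on_radial[OF assms lmeasurable_ball] absolutely_integrable_on_def by blast

lemma sphere_avg_add:
  fixes f g :: "real^'n::finite \<Rightarrow> real"
  assumes "continuous_on UNIV f" "continuous_on UNIV g"
  shows "sphere_avg (\<lambda>x. f x + g x) = sphere_avg f + sphere_avg g"
  unfolding sphere_avg_def
  using integral_add[OF integrable_on_radial[OF assms(1)] integrable_on_radial[OF assms(2)]]
  by (simp add: add_divide_distrib)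

lemma sphere_avg_cmult: "sphere_avg (\<lambda>x. c * f x) = c * sphere_avg f"
  unfolding sphere_avg_def by simp

lemma sphere_avg_diff:
  fixes f g :: "real^'n::finite \<Rightarrow> real"
  assumes "continuous_on UNIV f" "continuous_on UNIV g"
  shows "sphere_avg (\<lambda>x. f x - g x) = sphere_avg f - sphere_avg g"
  using sphere_avg_add[of f "\<lambda>x. (-1) * g x"] sphere_avg_cmult[of "-1" g] assms
  by (simp add: continuous_intros)

lemma sphere_avg_sum:
  fixes f :: "'i \<Rightarrow> real^'n::finite \<Rightarrow> real"
  assumes "finite I" "\<And>i. i \<in> I \<Longrightarrow> continuous_on UNIV (f i)"
  shows "sphere_avg (\<lambda>x. \<Sum>i\<in>I. f i x) = (\<Sum>i\<in>I. sphere_avg (f i))"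
  using assms
proof (induction I rule: finite_induct)
  case empty
  then show ?case by (simp add: sphere_avg_def)
next
  case (insert a I)
  then show ?case
    by (simp add: sphere_avg_add continuous_on_sum)
qed

lemma sphere_avg_const: "sphere_avg (\<lambda>x::real^'n::finite. c) = c"
proof -
  have "integral (ball (0::real^'n) 1) (\<lambda>x. c) = c * Henstock_Kurzweil_Integration.content (ball (0::real^'n) 1)"
    using lmeasure_integral[OF lmeasurable_ball, of "0::real^'n" 1]
      integral_mult_right[of "ball (0::real^'n) 1" c "\<lambda>x. 1"] by simp
  moreover have "Henstock_Kurzweil_Integration.content (ball (0::real^'n) 1) > 0"
    by simp
  ultimately show ?thesis
    by (simp add: sphere_avg_def)
qed

lemma sphere_avg_cong:
  fixes f g :: "real^'n::finite \<Rightarrow> real"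
  assumes "\<And>x. x \<in> sphere 0 1 \<Longrightarrow> f x = g x"
  shows "sphere_avg f = sphere_avg g"
proof -
  have "integral (ball 0 1) (\<lambda>x. f (x /\<^sub>R norm x)) = integral (ball 0 1) (\<lambda>x::real^'n. g (x /\<^sub>R norm x))"
    by (rule integral_spike[of "{0}"]) (use assms in auto)
  then show ?thesis
    unfolding sphere_avg_def by simp
qed

lemma sphere_avg_nonneg:
  fixes f :: "real^'n::finite \<Rightarrow> real"
  assumes f: "continuous_on UNIV f" and nonneg: "\<And>x. x \<in> sphere 0 1 \<Longrightarrow> 0 \<le> f x"
  shows "0 \<le> sphere_avg f"
proof -
  let ?h = "\<lambda>x::real^'n. if x = 0 then 0 else f (x /\<^sub>R norm x)"
  have "integral (ball 0 1) (\<lambda>x. f (x /\<^sub>R norm x)) = integral (ball 0 1) ?h"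
    by (rule integral_spike[of "{0}"]) auto
  moreover have "?h integrable_on ball 0 1"
    by (rule integrable_spike[OF integrable_on_radial[OF f] negligible_sing[of 0]]) auto
  then have "0 \<le> integral (ball 0 1) ?h"
    by (rule integral_nonneg) (use nonneg in auto)
  ultimately show ?thesis
    unfolding sphere_avg_def by simp
qed

lemma sphere_avg_mono:
  fixes f g :: "real^'n::finite \<Rightarrow> real"
  assumes "continuous_on UNIV f" "continuous_on UNIV g" "\<And>x. x \<in> sphere 0 1 \<Longrightarrow> f x \<le> g x"
  shows "sphere_avg f \<le> sphere_avg g"
  using sphere_avg_nonneg[of "\<lambda>x. g x - f x"] sphere_avg_diff[of g f] assms
  by (simp add: continuous_on_diff)

lemma sphere_avg_orthogonal_transformation:
  fixes f :: "real^'n::finite \<Rightarrow> real" and T :: "real^'n \<Rightarrow> real^'n"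
  assumes f: "continuous_on UNIV f" and T: "orthogonal_transformation T"
  shows "sphere_avg (\<lambda>x. f (T x)) = sphere_avg f"
proof -
  have "T (x /\<^sub>R norm x) = T x /\<^sub>R norm (T x)" for x
    using T by (simp add: orthogonal_transformation_norm orthogonal_transformation_scaleR)
  then have "(\<lambda>x. f (T (x /\<^sub>R norm x))) = (\<lambda>y. f (y /\<^sub>R norm y)) \<circ> T"
    by (simp add: o_def)
  then show ?thesis
    unfolding sphere_avg_def
    using integral_ball_orthogonal_transformation[OF T absolutely_integrable_on_radial[OF f lmeasurable_ball]]
    by simp
qed

lemma dist_normalize_half_ball:
  fixes x y :: "'a::real_normed_vector"
  assumes y: "norm y = 1" and x: "dist x (y /\<^sub>R 2) < r" and r: "r \<le> 1/4"
  shows "dist (x /\<^sub>R norm x) y < 4 * r"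
proof -
  have "\<bar>norm x - 1/2\<bar> < r"
    using norm_triangle_ineq3[of x "y /\<^sub>R 2"] x y by (simp add: dist_norm)
  then have x_pos: "norm x > 0" and "\<bar>1 - 2 * norm x\<bar> < 2 * r"
    using r by linarith+
  moreover have "x /\<^sub>R norm x - 2 *\<^sub>R x = ((1 - 2 * norm x) / norm x) *\<^sub>R x"
    using x_pos by (simp add: algebra_simps divide_inverse)
  then have "norm (x /\<^sub>R norm x - 2 *\<^sub>R x) = \<bar>1 - 2 * norm x\<bar>"
    using x_pos by simp
  moreover have "norm (2 *\<^sub>R x - y) = 2 * dist x (y /\<^sub>R 2)"
    unfolding dist_norm using norm_scaleR[of 2 "x - y /\<^sub>R 2"] by (simp add: algebra_simps)
  ultimately show ?thesis
    using norm_triangle_ineq[of "x /\<^sub>R norm x - 2 *\<^sub>R x" "2 *\<^sub>R x - y"] x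
    by (simp add: dist_norm)
qed

lemma sphere_avg_pos:
  fixes h :: "real^'n::finite \<Rightarrow> real"
  assumes h: "continuous_on UNIV h" and nonneg: "\<And>x. 0 \<le> h x"
    and y: "y \<in> sphere 0 1" and pos: "0 < h y"
  shows "0 < sphere_avg h"
proof -
  have "continuous (at y) h"
    using h by (simp add: continuous_on_eq_continuous_at)
  then obtain \<delta> where "\<delta> > 0" and \<delta>: "\<And>z. dist z y < \<delta> \<Longrightarrow> dist (h z) (h y) < h y / 2"
    using pos unfolding continuous_at_eps_delta by (metis half_gt_zero)
  define r where "r = min (\<delta> / 4) (1 / 4)"
  define c where "c = y /\<^sub>R 2"
  let ?H = "\<lambda>x. h (x /\<^sub>R norm x)"
  have r: "0 < r" "r \<le> 1 / 4" "4 * r \<le> \<delta>"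
    using \<open>\<delta> > 0\<close> by (auto simp: r_def)
  have H_big: "h y / 2 < ?H x" if "x \<in> ball c r" for x
  proof -
    have "dist (x /\<^sub>R norm x) y < \<delta>"
      using dist_normalize_half_ball[of y x r] that y r by (simp add: c_def dist_commute)
    then have "\<bar>h (x /\<^sub>R norm x) - h y\<bar> < h y / 2"
      using \<delta> by (simp add: dist_real_def)
    then show ?thesis
      by arith
  qed
  have sub: "ball c r \<subseteq> ball 0 1"
    using y r by (simp add: ball_subset_ball_iff c_def)
  have int: "?H integrable_on ball c r" "?H integrable_on ball 0 1"
    using absolutely_integrable_on_radial[OF h lmeasurable_ball] absolutely_integrable_on_def by blast+
  have "0 < h y / 2 * measure lebesgue (ball c r)"
    using pos r by simp
  also have "\<dots> = integral (ball c r) (\<lambda>x. h y / 2)"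
    using lmeasure_integral[OF lmeasurable_ball, of c r]
      integral_mult_right[of "ball c r" "h y / 2" "\<lambda>x. 1"] by simp
  also have "\<dots> \<le> integral (ball c r) ?H"
    using H_big by (intro integral_le[OF integrable_on_const[OF lmeasurable_ball] int(1)]) force
  also have "\<dots> \<le> integral (ball 0 1) ?H"
    using nonneg by (intro integral_subset_le[OF sub int]) simp
  finally show ?thesis
    by (simp add: sphere_avg_def)
qed

lemma sphere_avg_power2_eq_0:
  fixes f :: "real^'n::finite \<Rightarrow> real"
  assumes "continuous_on UNIV f" "sphere_avg (\<lambda>x. (f x)\<^sup>2) = 0" "y \<in> sphere 0 1"
  shows "f y = 0"
  using sphere_avg_pos[of "\<lambda>x. (f x)\<^sup>2" y] continuous_on_power[OF assms(1)] assms by fastforce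

section \<open>Homogeneous polynomials\<close>

definition hom_exps :: "nat \<Rightarrow> ('n::finite \<Rightarrow> nat) set" where
  "hom_exps m = {\<alpha>. sum \<alpha> UNIV = m}"

definition vec_monomial :: "('n::finite \<Rightarrow> nat) \<Rightarrow> real^'n \<Rightarrow> real" where
  "vec_monomial \<alpha> x = (\<Prod>i\<in>UNIV. (x $ i) ^ (\<alpha> i))"

definition is_hom_poly :: "nat \<Rightarrow> (real^'n::finite \<Rightarrow> real) \<Rightarrow> bool" where
  "is_hom_poly m f \<longleftrightarrow> (\<exists>c. f = hom_poly m c)"

lemma hom_poly_eq_sum_monomials: "hom_poly m c x = (\<Sum>\<alpha>\<in>hom_exps m. c \<alpha> * vec_monomial \<alpha> x)"
  by (simp add: hom_poly_def hom_exps_def vec_monomial_def)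

lemma hom_exps_le: "\<alpha> \<in> hom_exps m \<Longrightarrow> \<alpha> i \<le> m"
  using member_le_sum[of i UNIV \<alpha>] by (simp add: hom_exps_def)

lemma finite_hom_exps: "finite (hom_exps m :: ('n::finite \<Rightarrow> nat) set)"
proof (rule finite_subset)
  show "hom_exps m \<subseteq> Pi\<^sub>E (UNIV::'n set) (\<lambda>_. {..m})"
    by (auto simp: PiE_iff hom_exps_le)
qed (simp add: finite_PiE)

text \<open>An exponent vector of total degree m is determined by all but one of its entries.\<close>
lemma card_hom_exps_le: "card (hom_exps m :: ('n::finite \<Rightarrow> nat) set) \<le> (m + 1) ^ (CARD('n) - 1)"
proof -
  obtain i0 :: 'n where True by blast
  define J where "J = UNIV - {i0}"
  have split: "sum \<alpha> UNIV = \<alpha> i0 + sum \<alpha> J" for \<alpha> :: "'n \<Rightarrow> nat"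
    unfolding J_def by (rule sum.remove) auto
  have "inj_on (\<lambda>\<alpha>. restrict \<alpha> J) (hom_exps m)"
  proof
    fix \<alpha> \<beta> assume "\<alpha> \<in> hom_exps m" "\<beta> \<in> hom_exps m" and eq: "restrict \<alpha> J = restrict \<beta> J"
    have "\<alpha> i = \<beta> i" if "i \<in> J" for i
      using fun_cong[OF eq, of i] that by (simp only: restrict_apply')
    moreover from this have "\<alpha> i0 = \<beta> i0"
      using split[of \<alpha>] split[of \<beta>] \<open>\<alpha> \<in> hom_exps m\<close> \<open>\<beta> \<in> hom_exps m\<close>
      by (simp add: hom_exps_def)
    ultimately show "\<alpha> = \<beta>"
      by (metis DiffI J_def UNIV_I ext singletonD)
  qed
  moreover have "(\<lambda>\<alpha>. restrict \<alpha> J) ` hom_exps m \<subseteq> Pi\<^sub>E J (\<lambda>_. {..m})"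
    by (auto simp: hom_exps_le)
  ultimately have "card (hom_exps m :: ('n \<Rightarrow> nat) set) \<le> card (Pi\<^sub>E J (\<lambda>_. {..m}))"
    by (intro card_inj_on_le) (auto simp: finite_PiE)
  also have "\<dots> = (m + 1) ^ (CARD('n) - 1)"
    by (simp add: card_PiE J_def card_Diff_singleton)
  finally show ?thesis .
qed

lemma continuous_on_hom_poly: "continuous_on UNIV (hom_poly m c :: real^'n::finite \<Rightarrow> real)"
  unfolding hom_poly_def by (intro continuous_intros continuous_on_component continuous_on_id)

lemma is_hom_poly_continuous: "is_hom_poly m f \<Longrightarrow> continuous_on UNIV f"
  unfolding is_hom_poly_def using continuous_on_hom_poly by metis

lemma is_hom_poly_hom_poly [simp]: "is_hom_poly m (hom_poly m c)"
  unfolding is_hom_poly_def by blast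

lemma is_hom_poly_add: "is_hom_poly m f \<Longrightarrow> is_hom_poly m g \<Longrightarrow> is_hom_poly m (\<lambda>x. f x + g x)"
  unfolding is_hom_poly_def
proof (elim exE)
  fix c d assume "f = hom_poly m c" "g = hom_poly m d"
  then show "\<exists>e. (\<lambda>x. f x + g x) = hom_poly m e"
    by (intro exI[of _ "\<lambda>\<alpha>. c \<alpha> + d \<alpha>"]) (simp add: fun_eq_iff hom_poly_def sum.distrib distrib_right)
qed

lemma is_hom_poly_cmult: "is_hom_poly m f \<Longrightarrow> is_hom_poly m (\<lambda>x. a * f x)"
  unfolding is_hom_poly_def
proof (elim exE)
  fix c assume "f = hom_poly m c"
  then show "\<exists>e. (\<lambda>x. a * f x) = hom_poly m e"
    by (intro exI[of _ "\<lambda>\<alpha>. a * c \<alpha>"]) (simp add: fun_eq_iff hom_poly_def sum_distrib_left mult.assoc)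
qed

lemma is_hom_poly_diff: "is_hom_poly m f \<Longrightarrow> is_hom_poly m g \<Longrightarrow> is_hom_poly m (\<lambda>x. f x - g x)"
  using is_hom_poly_add[of m f "\<lambda>x. (-1) * g x"] is_hom_poly_cmult[of m g "-1"] by simp

lemma is_hom_poly_sum:
  fixes f :: "'i \<Rightarrow> real^'n::finite \<Rightarrow> real"
  shows "finite I \<Longrightarrow> (\<And>i. i \<in> I \<Longrightarrow> is_hom_poly m (f i)) \<Longrightarrow> is_hom_poly m (\<lambda>x. \<Sum>i\<in>I. f i x)"
proof (induction I rule: finite_induct)
  case empty
  show ?case
    unfolding is_hom_poly_def by (rule exI[of _ "\<lambda>_. 0"]) (simp add: fun_eq_iff hom_poly_def)
next
  case (insert a I)
  then show ?case by (simp add: is_hom_poly_add)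
qed

lemma is_hom_poly_monomial: "\<alpha> \<in> hom_exps m \<Longrightarrow> is_hom_poly m (vec_monomial \<alpha>)"
  unfolding is_hom_poly_def
proof (intro exI[of _ "\<lambda>\<beta>. if \<beta> = \<alpha> then 1 else 0"] ext)
  fix x assume \<alpha>: "\<alpha> \<in> hom_exps m"
  have "hom_poly m (\<lambda>\<beta>. if \<beta> = \<alpha> then 1 else 0) x
      = (\<Sum>\<beta>\<in>hom_exps m. if \<beta> = \<alpha> then vec_monomial \<beta> x else 0)"
    unfolding hom_poly_eq_sum_monomials by (rule sum.cong) auto
  then show "vec_monomial \<alpha> x = hom_poly m (\<lambda>\<beta>. if \<beta> = \<alpha> then 1 else 0) x"
    using \<alpha> by (simp add: finite_hom_exps)
qed

lemma vec_monomial_mult: "vec_monomial \<alpha> x * vec_monomial \<beta> x = vec_monomial (\<lambda>i. \<alpha> i + \<beta> i) x"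
  by (simp add: vec_monomial_def power_add prod.distrib)

lemma is_hom_poly_mult:
  fixes f g :: "real^'n::finite \<Rightarrow> real"
  assumes "is_hom_poly a f" "is_hom_poly b g"
  shows "is_hom_poly (a + b) (\<lambda>x. f x * g x)"
proof -
  obtain c d where f: "f = hom_poly a c" and g: "g = hom_poly b d"
    using assms is_hom_poly_def by metis
  have eq: "(\<lambda>x. f x * g x)
      = (\<lambda>x. \<Sum>\<alpha>\<in>hom_exps a. \<Sum>\<beta>\<in>hom_exps b. (c \<alpha> * d \<beta>) * vec_monomial (\<lambda>i. \<alpha> i + \<beta> i) x)"
    by (simp add: fun_eq_iff f g hom_poly_eq_sum_monomials sum_product mult_ac flip: vec_monomial_mult)
  have exps: "(\<lambda>i. \<alpha> i + \<beta> i) \<in> hom_exps (a + b)" if "\<alpha> \<in> hom_exps a" "\<beta> \<in> hom_exps b" for \<alpha> \<beta> :: "'n \<Rightarrow> nat"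
    using that by (simp add: hom_exps_def sum.distrib)
  show ?thesis
    unfolding eq by (intro is_hom_poly_sum finite_hom_exps is_hom_poly_cmult is_hom_poly_monomial exps)
qed

lemma is_hom_poly_const: "is_hom_poly 0 (\<lambda>x::real^'n::finite. 1)"
proof -
  have "vec_monomial (\<lambda>_::'n. 0) = (\<lambda>x::real^'n. 1)"
    by (simp add: fun_eq_iff vec_monomial_def)
  then show ?thesis
    using is_hom_poly_monomial[of "\<lambda>_::'n. 0" 0] by (simp add: hom_exps_def)
qed

lemma is_hom_poly_prod:
  fixes f :: "'i \<Rightarrow> real^'n::finite \<Rightarrow> real"
  shows "finite I \<Longrightarrow> (\<And>i. i \<in> I \<Longrightarrow> is_hom_poly (d i) (f i)) \<Longrightarrow> is_hom_poly (\<Sum>i\<in>I. d i) (\<lambda>x. \<Prod>i\<in>I. f i x)"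
proof (induction I rule: finite_induct)
  case empty
  then show ?case by (simp add: is_hom_poly_const)
next
  case (insert a I)
  then show ?case by (simp add: is_hom_poly_mult)
qed

lemma is_hom_poly_power: "is_hom_poly d f \<Longrightarrow> is_hom_poly (k * d) (\<lambda>x. f x ^ k)"
  using is_hom_poly_prod[of "{..<k}" "\<lambda>_. d" "\<lambda>_. f"] by simp

lemma is_hom_poly_component: "is_hom_poly 1 (\<lambda>x::real^'n::finite. x $ j)"
proof -
  have "vec_monomial (\<lambda>i. if i = j then 1 else 0) x = (\<Prod>i\<in>UNIV. if i = j then x $ i else 1)" for x :: "real^'n"
    unfolding vec_monomial_def by (rule prod.cong) auto
  then have "vec_monomial (\<lambda>i. if i = j then 1 else 0) = (\<lambda>x::real^'n. x $ j)"
    by (simp add: fun_eq_iff)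
  then show ?thesis
    using is_hom_poly_monomial[of "\<lambda>i::'n. if i = j then 1 else 0" 1] by (simp add: hom_exps_def)
qed

lemma is_hom_poly_comp_linear:
  fixes T :: "real^'n::finite \<Rightarrow> real^'n"
  assumes T: "linear T" and f: "is_hom_poly m f"
  shows "is_hom_poly m (\<lambda>x. f (T x))"
proof -
  obtain c where f: "f = hom_poly m c"
    using assms is_hom_poly_def by metis
  have T_comp: "T x $ i = (\<Sum>j\<in>UNIV. matrix T $ i $ j * x $ j)" for x i
    using fun_cong[OF matrix_vector_mul(2)[OF T], of x] unfolding matrix_vector_mult_def
    by (metis vec_lambda_beta)
  have "is_hom_poly 1 (\<lambda>x. T x $ i)" for i
    unfolding T_comp by (rule is_hom_poly_sum[OF finite]) (rule is_hom_poly_cmult[OF is_hom_poly_component])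
  then have monomial: "is_hom_poly (\<Sum>i\<in>UNIV. \<alpha> i * 1) (\<lambda>x. vec_monomial \<alpha> (T x))" for \<alpha>
    unfolding vec_monomial_def by (intro is_hom_poly_prod[OF finite] is_hom_poly_power)
  have "is_hom_poly m (\<lambda>x. vec_monomial \<alpha> (T x))" if "\<alpha> \<in> hom_exps m" for \<alpha>
    using monomial[of \<alpha>] that by (simp add: hom_exps_def)
  then have "is_hom_poly m (\<lambda>x. \<Sum>\<alpha>\<in>hom_exps m. c \<alpha> * vec_monomial \<alpha> (T x))"
    by (intro is_hom_poly_sum[OF finite_hom_exps] is_hom_poly_cmult)
  then show ?thesis
    by (simp add: f hom_poly_eq_sum_monomials)
qed

section \<open>Orthonormal bases and the reproducing kernel\<close>

definition orthonormal_hom_polys :: "nat \<Rightarrow> nat \<Rightarrow> (nat \<Rightarrow> real^'n::finite \<Rightarrow> real) \<Rightarrow> bool" where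
  "orthonormal_hom_polys m r e \<longleftrightarrow> (\<forall>i<r. is_hom_poly m (e i)) \<and>
     (\<forall>i<r. \<forall>j<r. sphere_avg (\<lambda>x. e i x * e j x) = (if i = j then 1 else 0))"

definition sphere_span :: "nat \<Rightarrow> (nat \<Rightarrow> real^'n::finite \<Rightarrow> real) \<Rightarrow> (real^'n \<Rightarrow> real) \<Rightarrow> bool" where
  "sphere_span r e f \<longleftrightarrow> (\<exists>a. \<forall>x\<in>sphere 0 1. f x = (\<Sum>i<r. a i * e i x))"

lemma orthonormal_hom_polys_continuous:
  "orthonormal_hom_polys m r e \<Longrightarrow> i < r \<Longrightarrow> continuous_on UNIV (e i)"
  unfolding orthonormal_hom_polys_def by (blast intro: is_hom_poly_continuous)

lemma is_hom_poly_lincomb: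
  fixes e :: "nat \<Rightarrow> real^'n::finite \<Rightarrow> real"
  shows "(\<And>i. i < r \<Longrightarrow> is_hom_poly m (e i)) \<Longrightarrow> is_hom_poly m (\<lambda>x. \<Sum>j<r. b j * e j x)"
  by (rule is_hom_poly_sum) (auto intro: is_hom_poly_cmult)

lemma sphere_avg_mult_lincomb:
  assumes on: "orthonormal_hom_polys m r e" and i: "i < r"
  shows "sphere_avg (\<lambda>x. e i x * (\<Sum>j<r. a j * e j x)) = a i"
proof -
  have "sphere_avg (\<lambda>x. e i x * (\<Sum>j<r. a j * e j x)) = sphere_avg (\<lambda>x. \<Sum>j<r. a j * (e i x * e j x))"
    by (simp add: sum_distrib_left mult_ac)
  also have "\<dots> = (\<Sum>j<r. a j * sphere_avg (\<lambda>x. e i x * e j x))"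
    by (subst sphere_avg_sum)
       (auto simp: sphere_avg_cmult intro!: continuous_intros orthonormal_hom_polys_continuous[OF on] i)
  also have "\<dots> = (\<Sum>j<r. if j = i then a j else 0)"
    using on i by (intro sum.cong) (auto simp: orthonormal_hom_polys_def)
  finally show ?thesis
    using i by simp
qed

lemma sphere_avg_lincomb_mult_lincomb:
  assumes on: "orthonormal_hom_polys m r e"
  shows "sphere_avg (\<lambda>x. (\<Sum>i<r. a i * e i x) * (\<Sum>j<r. b j * e j x)) = (\<Sum>i<r. a i * b i)"
proof -
  have "sphere_avg (\<lambda>x. (\<Sum>i<r. a i * e i x) * (\<Sum>j<r. b j * e j x))
      = sphere_avg (\<lambda>x. \<Sum>i<r. a i * (e i x * (\<Sum>j<r. b j * e j x)))"
    by (simp add: sum_distrib_right mult_ac)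
  also have "\<dots> = (\<Sum>i<r. a i * sphere_avg (\<lambda>x. e i x * (\<Sum>j<r. b j * e j x)))"
    by (subst sphere_avg_sum)
       (auto simp: sphere_avg_cmult intro!: continuous_intros orthonormal_hom_polys_continuous[OF on])
  finally show ?thesis
    using sphere_avg_mult_lincomb[OF on] by simp
qed

lemma sphere_avg_mult_residual:
  assumes on: "orthonormal_hom_polys m r e" and g: "continuous_on UNIV g" and i: "i < r"
  shows "sphere_avg (\<lambda>x. e i x * (g x - (\<Sum>j<r. sphere_avg (\<lambda>y. e j y * g y) * e j x))) = 0"
proof -
  have "sphere_avg (\<lambda>x. e i x * (g x - (\<Sum>j<r. sphere_avg (\<lambda>y. e j y * g y) * e j x)))
      = sphere_avg (\<lambda>x. e i x * g x)
        - sphere_avg (\<lambda>x. e i x * (\<Sum>j<r. sphere_avg (\<lambda>y. e j y * g y) * e j x))"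
    unfolding right_diff_distrib
    by (intro sphere_avg_diff continuous_intros g orthonormal_hom_polys_continuous[OF on] i) auto
  then show ?thesis
    using sphere_avg_mult_lincomb[OF on i] by simp
qed

lemma orthonormal_hom_polys_extend:
  assumes on: "orthonormal_hom_polys m r e" and h: "is_hom_poly m h"
    and orth: "\<And>i. i < r \<Longrightarrow> sphere_avg (\<lambda>x. e i x * h x) = 0"
    and norm: "sphere_avg (\<lambda>x. h x * h x) = s * s" and "s \<noteq> 0"
  shows "orthonormal_hom_polys m (Suc r) (e(r := \<lambda>x. inverse s * h x))"
  unfolding orthonormal_hom_polys_def
proof (intro conjI allI impI)
  fix i assume "i < Suc r"
  then show "is_hom_poly m ((e(r := \<lambda>x. inverse s * h x)) i)"
    using on h by (cases "i = r") (auto simp: orthonormal_hom_polys_def is_hom_poly_cmult)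
next
  have orth': "sphere_avg (\<lambda>x. e i x * (inverse s * h x)) = 0" if "i < r" for i
    using orth[OF that] sphere_avg_cmult[of "inverse s" "\<lambda>x. e i x * h x"]
    by (simp add: mult.left_commute)
  have norm': "sphere_avg (\<lambda>x. inverse s * h x * (inverse s * h x)) = 1"
    using norm \<open>s \<noteq> 0\<close> sphere_avg_cmult[of "inverse s * inverse s" "\<lambda>x. h x * h x"]
    by (simp add: mult_ac)
  fix i j assume "i < Suc r" "j < Suc r"
  then consider "i = r" "j = r" | "i = r" "j < r" | "i < r" "j = r" | "i < r" "j < r"
    by linarith
  then show "sphere_avg (\<lambda>x. (e(r := \<lambda>x. inverse s * h x)) i x * (e(r := \<lambda>x. inverse s * h x)) j x)
      = (if i = j then 1 else 0)"
  proof cases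
    case 2
    then show ?thesis
      using orth'[of j] by (simp add: mult.commute)
  next
    case 4
    then show ?thesis
      using on by (simp add: orthonormal_hom_polys_def)
  qed (use norm' orth' in simp_all)
qed

lemma sphere_span_extend:
  assumes "sphere_span r e f"
  shows "sphere_span (Suc r) (e(r := u)) f"
proof -
  obtain a where a: "\<forall>x\<in>sphere 0 1. f x = (\<Sum>i<r. a i * e i x)"
    using assms unfolding sphere_span_def by blast
  have "(\<Sum>i<Suc r. (a(r := 0)) i * (e(r := u)) i x) = (\<Sum>i<r. a i * e i x)" for x
    by (auto intro!: sum.cong)
  then show ?thesis
    unfolding sphere_span_def using a by metis
qed

lemma gram_schmidt_step:
  assumes on: "orthonormal_hom_polys m r e" and g: "is_hom_poly m g"
  obtains r' e' where "r' \<le> Suc r" "orthonormal_hom_polys m r' e'"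
    "\<And>f. sphere_span r e f \<Longrightarrow> sphere_span r' e' f" "sphere_span r' e' g"
proof -
  define b where "b i = sphere_avg (\<lambda>x. e i x * g x)" for i
  define h where "h x = g x - (\<Sum>i<r. b i * e i x)" for x
  have h: "is_hom_poly m h"
    using on unfolding h_def orthonormal_hom_polys_def by (intro is_hom_poly_diff g is_hom_poly_lincomb) auto
  have h_orth: "sphere_avg (\<lambda>x. e i x * h x) = 0" if "i < r" for i
    unfolding h_def b_def by (rule sphere_avg_mult_residual[OF on is_hom_poly_continuous[OF g] that])
  define s where "s = sqrt (sphere_avg (\<lambda>x. h x * h x))"
  have "0 \<le> sphere_avg (\<lambda>x. h x * h x)"
    by (intro sphere_avg_nonneg continuous_intros is_hom_poly_continuous[OF h]) simp
  then have norm: "sphere_avg (\<lambda>x. h x * h x) = s * s"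
    by (simp add: s_def)
  show ?thesis
  proof (cases "s = 0")
    case True
    then have "h x = 0" if "x \<in> sphere 0 1" for x
      using sphere_avg_power2_eq_0[OF is_hom_poly_continuous[OF h] _ that] norm
      by (simp add: power2_eq_square)
    then have "sphere_span r e g"
      unfolding sphere_span_def by (intro exI[of _ b]) (simp add: h_def)
    then show ?thesis
      using that[of r e] on by simp
  next
    case False
    let ?e = "e(r := \<lambda>x. inverse s * h x)"
    have "g x = (\<Sum>i<Suc r. (b(r := s)) i * ?e i x)" for x
    proof -
      have "(\<Sum>i<r. (b(r := s)) i * ?e i x) = (\<Sum>i<r. b i * e i x)"
        by (auto intro!: sum.cong)
      then show ?thesis
        using False by (simp add: h_def mult.assoc[symmetric])
    qed
    then have "sphere_span (Suc r) ?e g"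
      unfolding sphere_span_def by blast
    then show ?thesis
      using that[of "Suc r" ?e] orthonormal_hom_polys_extend[OF on h h_orth norm False]
        sphere_span_extend by blast
  qed
qed

lemma sphere_span_lincomb:
  assumes "finite I" and span: "\<And>k. k \<in> I \<Longrightarrow> sphere_span r e (f k)"
  shows "sphere_span r e (\<lambda>x. \<Sum>k\<in>I. c k * f k x)"
proof -
  have "\<forall>k\<in>I. \<exists>a. \<forall>x\<in>sphere 0 1. f k x = (\<Sum>i<r. a i * e i x)"
    using span unfolding sphere_span_def by blast
  from bchoice[OF this] obtain A where A: "\<forall>k\<in>I. \<forall>x\<in>sphere 0 1. f k x = (\<Sum>i<r. A k i * e i x)"
    by blast
  have "(\<Sum>k\<in>I. c k * f k x) = (\<Sum>i<r. (\<Sum>k\<in>I. c k * A k i) * e i x)" if x: "x \<in> sphere 0 1" for x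
  proof -
    have "c k * f k x = (\<Sum>i<r. c k * A k i * e i x)" if "k \<in> I" for k
      using A that x by (simp add: sum_distrib_left mult.assoc)
    then have "(\<Sum>k\<in>I. c k * f k x) = (\<Sum>k\<in>I. \<Sum>i<r. c k * A k i * e i x)"
      by (rule sum.cong[OF refl])
    also have "\<dots> = (\<Sum>i<r. (\<Sum>k\<in>I. c k * A k i) * e i x)"
      by (subst sum.swap) (simp add: sum_distrib_right)
    finally show ?thesis .
  qed
  then show ?thesis
    unfolding sphere_span_def by (intro exI[of _ "\<lambda>i. \<Sum>k\<in>I. c k * A k i"]) blast
qed

lemma exists_orthonormal_basis:
  obtains r and e :: "nat \<Rightarrow> real^'n::finite \<Rightarrow> real"
  where "r \<le> card (hom_exps m :: ('n \<Rightarrow> nat) set)" "orthonormal_hom_polys m r e"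
    "\<And>f. is_hom_poly m f \<Longrightarrow> sphere_span r e f"
proof -
  have "\<exists>r (e :: nat \<Rightarrow> real^'n \<Rightarrow> real). r \<le> card B \<and> orthonormal_hom_polys m r e
      \<and> (\<forall>\<alpha>\<in>B. sphere_span r e (vec_monomial \<alpha>))"
    if "B \<subseteq> hom_exps m" for B
    using finite_subset[OF that finite_hom_exps] that
  proof (induction B rule: finite_induct)
    case empty
    show ?case
      by (intro exI[of _ 0]) (simp add: orthonormal_hom_polys_def)
  next
    case (insert \<alpha> B)
    then obtain r and e :: "nat \<Rightarrow> real^'n \<Rightarrow> real" where
      r: "r \<le> card B" and on: "orthonormal_hom_polys m r e"
      and span: "\<forall>\<beta>\<in>B. sphere_span r e (vec_monomial \<beta>)"
      by auto
    have "is_hom_poly m (vec_monomial \<alpha>)"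
      using insert.prems by (simp add: is_hom_poly_monomial)
    with on obtain r' e' where "r' \<le> Suc r" "orthonormal_hom_polys m r' e'"
      "\<And>f. sphere_span r e f \<Longrightarrow> sphere_span r' e' f" "sphere_span r' e' (vec_monomial \<alpha>)"
      by (rule gram_schmidt_step) blast
    moreover have "card (insert \<alpha> B) = Suc (card B)"
      using insert.hyps by simp
    ultimately show ?case
      using r span by (intro exI[of _ r'] exI[of _ e']) auto
  qed
  then obtain r and e :: "nat \<Rightarrow> real^'n \<Rightarrow> real" where
    "r \<le> card (hom_exps m :: ('n \<Rightarrow> nat) set)" "orthonormal_hom_polys m r e"
    and monomials: "\<And>\<alpha>. \<alpha> \<in> hom_exps m \<Longrightarrow> sphere_span r e (vec_monomial \<alpha>)"
    by blast
  moreover have "sphere_span r e (hom_poly m c)" for c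
    using sphere_span_lincomb[OF finite_hom_exps monomials, where c=c]
    by (simp add: hom_poly_eq_sum_monomials[abs_def])
  ultimately show ?thesis
    using that[of r e] unfolding is_hom_poly_def by blast
qed

lemma bessel_inequality:
  assumes on: "orthonormal_hom_polys m r f" and v: "continuous_on UNIV v"
  shows "(\<Sum>i<r. (sphere_avg (\<lambda>x. f i x * v x))\<^sup>2) \<le> sphere_avg (\<lambda>x. v x * v x)"
proof -
  define c where "c i = sphere_avg (\<lambda>x. f i x * v x)" for i
  define P where "P x = (\<Sum>i<r. c i * f i x)" for x
  have f: "\<And>i. i < r \<Longrightarrow> continuous_on UNIV (f i)"
    using orthonormal_hom_polys_continuous[OF on] .
  have P: "continuous_on UNIV P"
    unfolding P_def by (intro continuous_intros f) simp
  have vP: "sphere_avg (\<lambda>x. v x * P x) = (\<Sum>i<r. c i * c i)"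
  proof -
    have "sphere_avg (\<lambda>x. v x * P x) = sphere_avg (\<lambda>x. \<Sum>i<r. c i * (f i x * v x))"
      by (simp add: P_def sum_distrib_left mult_ac)
    also have "\<dots> = (\<Sum>i<r. c i * c i)"
      by (subst sphere_avg_sum) (auto simp: sphere_avg_cmult c_def intro!: continuous_intros f v)
    finally show ?thesis .
  qed
  have PP: "sphere_avg (\<lambda>x. P x * P x) = (\<Sum>i<r. c i * c i)"
    unfolding P_def by (rule sphere_avg_lincomb_mult_lincomb[OF on])
  have "0 \<le> sphere_avg (\<lambda>x. (v x - P x) * (v x - P x))"
    by (intro sphere_avg_nonneg continuous_intros v P) simp
  also have "\<dots> = sphere_avg (\<lambda>x. (v x * v x - 2 * (v x * P x)) + P x * P x)"
    by (simp add: algebra_simps)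
  also have "\<dots> = sphere_avg (\<lambda>x. v x * v x) - 2 * sphere_avg (\<lambda>x. v x * P x) + sphere_avg (\<lambda>x. P x * P x)"
    by (simp add: sphere_avg_add sphere_avg_diff sphere_avg_cmult continuous_intros v P)
  finally show ?thesis
    using vP PP by (simp add: c_def power2_eq_square)
qed

definition sphere_kernel :: "nat \<Rightarrow> (nat \<Rightarrow> real^'n::finite \<Rightarrow> real) \<Rightarrow> real^'n \<Rightarrow> real^'n \<Rightarrow> real" where
  "sphere_kernel r e y x = (\<Sum>i<r. e i y * e i x)"

lemma continuous_on_sphere_kernel:
  "orthonormal_hom_polys m r e \<Longrightarrow> continuous_on UNIV (sphere_kernel r e y)"
  unfolding sphere_kernel_def by (intro continuous_intros orthonormal_hom_polys_continuous) auto

lemma sphere_avg_mult_sphere_kernel: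
  assumes on: "orthonormal_hom_polys m r e" and f: "sphere_span r e f" and y: "y \<in> sphere 0 1"
  shows "sphere_avg (\<lambda>x. f x * sphere_kernel r e y x) = f y"
proof -
  obtain a where a: "\<forall>x\<in>sphere 0 1. f x = (\<Sum>i<r. a i * e i x)"
    using f sphere_span_def by blast
  have "sphere_avg (\<lambda>x. f x * sphere_kernel r e y x)
      = sphere_avg (\<lambda>x. (\<Sum>i<r. a i * e i x) * (\<Sum>j<r. e j y * e j x))"
    using a by (intro sphere_avg_cong) (simp add: sphere_kernel_def)
  also have "\<dots> = f y"
    using sphere_avg_lincomb_mult_lincomb[OF on] a y by simp
  finally show ?thesis .
qed

lemma orthonormal_hom_polys_comp_orthogonal:
  fixes T :: "real^'n::finite \<Rightarrow> real^'n"
  assumes on: "orthonormal_hom_polys m r e" and T: "orthogonal_transformation T"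
  shows "orthonormal_hom_polys m r (\<lambda>i x. e i (T x))"
  unfolding orthonormal_hom_polys_def
proof (intro conjI allI impI)
  have "linear T"
    using T orthogonal_transformation_linear by blast
  fix i assume "i < r"
  then have "is_hom_poly m (e i)"
    using on by (simp add: orthonormal_hom_polys_def)
  then show "is_hom_poly m (\<lambda>x. e i (T x))"
    by (rule is_hom_poly_comp_linear[OF \<open>linear T\<close>])
next
  fix i j assume "i < r" "j < r"
  then have "continuous_on UNIV (\<lambda>x. e i x * e j x)"
    by (intro continuous_intros orthonormal_hom_polys_continuous[OF on])
  then have "sphere_avg (\<lambda>x. e i (T x) * e j (T x)) = sphere_avg (\<lambda>x. e i x * e j x)"
    using sphere_avg_orthogonal_transformation[OF _ T] by blast
  then show "sphere_avg (\<lambda>x. e i (T x) * e j (T x)) = (if i = j then 1 else 0)"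
    using on \<open>i < r\<close> \<open>j < r\<close> by (simp add: orthonormal_hom_polys_def)
qed

lemma sphere_kernel_diag_le:
  assumes on: "orthonormal_hom_polys m r e" and span: "\<And>f. is_hom_poly m f \<Longrightarrow> sphere_span r e f"
    and x: "x \<in> sphere 0 1" and y: "y \<in> sphere 0 1"
  shows "sphere_kernel r e x x \<le> sphere_kernel r e y y"
proof -
  obtain T where T: "orthogonal_transformation T" and "T y = x"
    using orthogonal_transformation_exists[of y x] x y by auto
  have on_T: "orthonormal_hom_polys m r (\<lambda>i z. e i (T z))"
    by (rule orthonormal_hom_polys_comp_orthogonal[OF on T])
  have "sphere_kernel r e x x = (\<Sum>i<r. (e i (T y))\<^sup>2)"
    using \<open>T y = x\<close> by (simp add: sphere_kernel_def power2_eq_square)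
  also have "\<dots> = (\<Sum>i<r. (sphere_avg (\<lambda>z. e i (T z) * sphere_kernel r e y z))\<^sup>2)"
    using on_T y by (intro sum.cong refl)
      (simp add: sphere_avg_mult_sphere_kernel[OF on] span orthonormal_hom_polys_def)
  also have "\<dots> \<le> sphere_avg (\<lambda>z. sphere_kernel r e y z * sphere_kernel r e y z)"
    by (rule bessel_inequality[OF on_T continuous_on_sphere_kernel[OF on]])
  also have "\<dots> = sphere_kernel r e y y"
    unfolding sphere_kernel_def by (rule sphere_avg_lincomb_mult_lincomb[OF on])
  finally show ?thesis .
qed

lemma sphere_kernel_diag_le_dim:
  fixes e :: "nat \<Rightarrow> real^'n::finite \<Rightarrow> real"
  assumes on: "orthonormal_hom_polys m r e" and span: "\<And>f. is_hom_poly m f \<Longrightarrow> sphere_span r e f"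
    and x: "x \<in> sphere 0 1"
  shows "sphere_kernel r e x x \<le> r"
proof -
  have "sphere_kernel r e x x = sphere_avg (\<lambda>y::real^'n. sphere_kernel r e x x)"
    by (rule sphere_avg_const[symmetric])
  also have "\<dots> \<le> sphere_avg (\<lambda>y. \<Sum>i<r. e i y * e i y)"
    using sphere_kernel_diag_le[OF on span x] unfolding sphere_kernel_def
    by (intro sphere_avg_mono continuous_intros orthonormal_hom_polys_continuous[OF on]) auto
  also have "\<dots> = (\<Sum>i<r. sphere_avg (\<lambda>y. e i y * e i y))"
    by (intro sphere_avg_sum continuous_intros orthonormal_hom_polys_continuous[OF on]) auto
  also have "\<dots> = r"
    using on by (simp add: orthonormal_hom_polys_def)
  finally show ?thesis .
qed

lemma hom_poly_power2_le:
  fixes q :: "real^'n::finite \<Rightarrow> real"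
  assumes q: "is_hom_poly m q" and x: "x \<in> sphere 0 1"
  shows "(q x)\<^sup>2 \<le> card (hom_exps m :: ('n \<Rightarrow> nat) set) * sphere_avg (\<lambda>y. (q y)\<^sup>2)"
proof -
  obtain r and e :: "nat \<Rightarrow> real^'n \<Rightarrow> real" where
    r: "r \<le> card (hom_exps m :: ('n \<Rightarrow> nat) set)" and on: "orthonormal_hom_polys m r e"
    and span: "\<And>f. is_hom_poly m f \<Longrightarrow> sphere_span r e f"
    by (rule exists_orthonormal_basis[of m]) blast
  obtain a where a: "\<forall>y\<in>sphere 0 1. q y = (\<Sum>i<r. a i * e i y)"
    using span[OF q] sphere_span_def by blast
  have norm_q: "sphere_avg (\<lambda>y. (q y)\<^sup>2) = (\<Sum>i<r. (a i)\<^sup>2)"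
  proof -
    have "sphere_avg (\<lambda>y. (q y)\<^sup>2) = sphere_avg (\<lambda>y. (\<Sum>i<r. a i * e i y) * (\<Sum>i<r. a i * e i y))"
      using a by (intro sphere_avg_cong) (simp add: power2_eq_square)
    then show ?thesis
      using sphere_avg_lincomb_mult_lincomb[OF on] by (simp add: power2_eq_square)
  qed
  have "(q x)\<^sup>2 = (\<Sum>i<r. a i * e i x)\<^sup>2"
    using a x by simp
  also have "\<dots> \<le> (\<Sum>i<r. (a i)\<^sup>2) * sphere_kernel r e x x"
    using Cauchy_Schwarz_ineq_sum[of a "\<lambda>i. e i x" "{..<r}"]
    by (simp add: sphere_kernel_def power2_eq_square)
  also have "\<dots> \<le> (\<Sum>i<r. (a i)\<^sup>2) * card (hom_exps m :: ('n \<Rightarrow> nat) set)"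
    using sphere_kernel_diag_le_dim[OF on span x] r
    by (intro mult_left_mono) (simp_all add: sum_nonneg)
  finally show ?thesis
    by (simp add: norm_q mult.commute)
qed

section \<open>Comparison of the norms\<close>

lemma powr_root_power: "0 \<le> (a::real) \<Longrightarrow> 0 < n \<Longrightarrow> (a ^ n) powr (1 / real n) = a"
  by (simp add: powr_realpow'[symmetric] powr_powr)

lemma abs_le_sph_sup_norm:
  fixes p :: "real^'n::finite \<Rightarrow> real"
  assumes "continuous_on UNIV p" and "x \<in> sphere 0 1"
  shows "\<bar>p x\<bar> \<le> sph_sup_norm p"
proof -
  have "compact ((\<lambda>x. \<bar>p x\<bar>) ` sphere 0 1)"
    using assms by (intro compact_continuous_image continuous_intros compact_sphere)
      (auto intro: continuous_on_subset)
  then have "bdd_above ((\<lambda>x. \<bar>p x\<bar>) ` sphere 0 1)"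
    by (simp add: bounded_imp_bdd_above compact_imp_bounded)
  then show ?thesis
    unfolding sph_sup_norm_def using assms(2) by (rule cSUP_upper2) simp
qed

lemma sph_Lnorm_le_sph_sup_norm:
  fixes p :: "real^'n::finite \<Rightarrow> real"
  assumes p: "continuous_on UNIV p" and k: "k \<ge> 1"
  shows "sph_Lnorm k p \<le> sph_sup_norm p"
proof -
  let ?M = "sph_sup_norm p"
  have M: "\<bar>p x\<bar> \<le> ?M" if "x \<in> sphere 0 1" for x
    using abs_le_sph_sup_norm[OF p that] .
  obtain x0 :: "real^'n" where "x0 \<in> sphere 0 1"
    using sphere_eq_empty[of "0::real^'n" 1] by fastforce
  then have "0 \<le> ?M"
    using M abs_ge_zero order_trans by blast
  have "sphere_avg (\<lambda>x. p x ^ (2 * k)) \<le> sphere_avg (\<lambda>x::real^'n. ?M ^ (2 * k))"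
  proof (rule sphere_avg_mono)
    show "p x ^ (2 * k) \<le> ?M ^ (2 * k)" if "x \<in> sphere 0 1" for x
      using power_mono[OF M[OF that], of "2 * k"] by (simp add: power_even_abs)
  qed (use p in \<open>auto intro: continuous_intros\<close>)
  moreover have "0 \<le> sphere_avg (\<lambda>x. p x ^ (2 * k))"
    by (intro sphere_avg_nonneg continuous_intros p) (simp add: zero_le_even_power)
  ultimately have "sph_Lnorm k p \<le> (?M ^ (2 * k)) powr (1 / real (2 * k))"
    unfolding sph_Lnorm_def sphere_avg_const by (intro powr_mono2) simp_all
  also have "\<dots> = ?M"
    using powr_root_power[OF \<open>0 \<le> ?M\<close>, of "2 * k"] k by simp
  finally show ?thesis .
qed

lemma sph_sup_norm_hom_poly_le:
  fixes c :: "('n::finite \<Rightarrow> nat) \<Rightarrow> real"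
  assumes k: "k \<ge> 1"
  shows "sph_sup_norm (hom_poly d c)
    \<le> real (card (hom_exps (k * d) :: ('n \<Rightarrow> nat) set)) powr (1 / real (2 * k)) * sph_Lnorm k (hom_poly d c)"
proof -
  let ?p = "hom_poly d c :: real^'n \<Rightarrow> real"
  let ?N = "real (card (hom_exps (k * d) :: ('n \<Rightarrow> nat) set))"
  let ?A = "sphere_avg (\<lambda>x. ?p x ^ (2 * k))"
  have power: "?p x ^ (2 * k) = (?p x ^ k)\<^sup>2" for x
    by (simp add: power_mult mult.commute)
  have q: "is_hom_poly (k * d) (\<lambda>x. ?p x ^ k)"
    by (rule is_hom_poly_power) simp
  have "\<bar>?p x\<bar> \<le> ?N powr (1 / real (2 * k)) * sph_Lnorm k ?p" if x: "x \<in> sphere 0 1" for x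
  proof -
    have "\<bar>?p x\<bar> ^ (2 * k) \<le> ?N * ?A"
      using hom_poly_power2_le[OF q x] by (simp add: power_even_abs power)
    then have "(\<bar>?p x\<bar> ^ (2 * k)) powr (1 / real (2 * k)) \<le> (?N * ?A) powr (1 / real (2 * k))"
      by (intro powr_mono2) simp_all
    then have "\<bar>?p x\<bar> \<le> (?N * ?A) powr (1 / real (2 * k))"
      using powr_root_power[OF abs_ge_zero, of "2 * k" "?p x"] k by simp
    then show ?thesis
      by (simp add: sph_Lnorm_def powr_mult)
  qed
  then show ?thesis
    unfolding sph_sup_norm_def by (intro cSUP_least) auto
qed

lemma power_powr_less:
  fixes b c q :: real
  assumes "0 < b" "0 < c" "real j / q * ln b < ln c"
  shows "(b ^ j) powr (1 / q) < c"
proof -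
  have "(b ^ j) powr (1 / q) = exp (real j / q * ln b)"
    using assms(1) by (simp add: powr_def ln_realpow)
  also have "\<dots> < exp (ln c)"
    using assms(3) by simp
  finally show ?thesis
    using assms(2) by simp
qed

theorem mainTheorem10:
  fixes c :: "('n::finite \<Rightarrow> nat) \<Rightarrow> real" and d k :: nat and \<epsilon> :: real
  assumes "CARD('n) \<ge> 2" and "d \<ge> 1" and "\<epsilon> > 0" and "k \<ge> 1"
    and "(real CARD('n) - 1) / (2 * real k) * ln (real k * real d + 1) < ln (1 + \<epsilon>)"
  shows "sph_Lnorm k (hom_poly d c) \<le> sph_sup_norm (hom_poly d c)
       \<and> sph_sup_norm (hom_poly d c) \<le> (1 + \<epsilon>) * sph_Lnorm k (hom_poly d c)"
proof
  show "sph_Lnorm k (hom_poly d c) \<le> sph_sup_norm (hom_poly d c)"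
    using sph_Lnorm_le_sph_sup_norm[OF continuous_on_hom_poly \<open>k \<ge> 1\<close>] .
  have "real (card (hom_exps (k * d) :: ('n \<Rightarrow> nat) set)) \<le> real (k * d + 1) ^ (CARD('n) - 1)"
    using card_hom_exps_le[of "k * d", where 'n='n] by (metis of_nat_le_iff of_nat_power)
  then have "real (card (hom_exps (k * d) :: ('n \<Rightarrow> nat) set)) powr (1 / real (2 * k))
      \<le> (real (k * d + 1) ^ (CARD('n) - 1)) powr (1 / real (2 * k))"
    by (intro powr_mono2) simp_all
  also have "\<dots> < 1 + \<epsilon>"
    using assms by (intro power_powr_less) (simp_all add: of_nat_diff add.commute add_pos_nonneg)
  finally have "real (card (hom_exps (k * d) :: ('n \<Rightarrow> nat) set)) powr (1 / real (2 * k)) * sph_Lnorm k (hom_poly d c)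
      \<le> (1 + \<epsilon>) * sph_Lnorm k (hom_poly d c)"
    by (intro mult_right_mono) (simp_all add: sph_Lnorm_def)
  then show "sph_sup_norm (hom_poly d c) \<le> (1 + \<epsilon>) * sph_Lnorm k (hom_poly d c)"
    using sph_sup_norm_hom_poly_le[OF \<open>k \<ge> 1\<close>, of d c] by linarith
qed

end
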